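(* Let $A=(a_{ij})$ be an $n\times n$ symmetric matrix with nonnegative entries and zero diagonal (the weighted adjacency matrix of an undirected edge-weighted graph without self-loops on vertex set $V=\{1,\dots,n\}$). Let $S\subseteq V$ with $S\neq\emptyset$, and define $$\gamma_S=\max_{\mathbf{x}\in\Delta_{V\setminus S}}\ \min_{i\in S}\ \frac{\mathbf{x}'A\mathbf{x}-(A\mathbf{x})_i}{\mathbf{x}'\mathbf{x}}.$$ Let $\alpha>\gamma_S$. If $\mathbf{x}$ is a local maximizer of $f_S^\alpha(\mathbf{x})=\mathbf{x}'(A-\alpha\hat I_S)\mathbf{x}$ over $\Delta$, then $\sigma(\mathbf{x})\cap S\neq\emptyset$.
   Context: $\Delta=\{\mathbf{x}\in\mathbb{R}^n:\sum_i x_i=1,\ x_i\ge 0\}$ is the standard simplex; for $T\subseteq V$, $\Delta_T=\{\mathbf{x}\in\Delta:\sigma(\mathbf{x})\subseteq T\}$, where $\sigma(\mathbf{x})=\{i\in V: x_i>0\}$ is the support. $\hat I_S$ is the $n\times n$ diagonal matrix whose diagonal entries are $1$ at indices in $V\setminus S$ and $0$ at indices in $S$. A prime denotes transposition. *)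

theory Defs
  imports "HOL-Analysis.Analysis"
begin

text \<open>Vertex set V is the finite index type 'n; vectors are real^'n, matrices real^'n^'n.\<close>

definition std_simplex :: "(real^'n) set" where
  "std_simplex = {x. sum (\<lambda>i. x $ i) UNIV = 1 \<and> (\<forall>i. x $ i \<ge> 0)}"

definition supp :: "real^'n \<Rightarrow> 'n set" where
  "supp x = {i. x $ i > 0}"

definition simplex_on :: "'n set \<Rightarrow> (real^'n) set" where
  "simplex_on T = {x \<in> std_simplex. supp x \<subseteq> T}"

definition Ihat :: "'n set \<Rightarrow> real^'n^'n" where
  "Ihat S = (\<chi> i j. if i = j \<and> i \<notin> S then 1 else 0)"

text \<open>gamma_S = max over x in Delta_{V-S} of min_{i in S} (x'Ax - (Ax)_i)/(x'x).
  The maximum is attained (continuous function on a compact set), so it equals the supremum.\<close>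
definition gamma :: "real^'n^'n \<Rightarrow> 'n set \<Rightarrow> real" where
  "gamma A S = Sup ((\<lambda>x. Min ((\<lambda>i. (x \<bullet> (A *v x) - (A *v x) $ i) / (x \<bullet> x)) ` S))
                     ` simplex_on (UNIV - S))"

definition f_S :: "real^'n^'n \<Rightarrow> 'n set \<Rightarrow> real \<Rightarrow> real^'n \<Rightarrow> real" where
  "f_S A S \<alpha> x = x \<bullet> ((A - \<alpha> *\<^sub>R Ihat S) *v x)"

definition local_maximizer_on :: "(real^'n \<Rightarrow> real) \<Rightarrow> (real^'n) set \<Rightarrow> real^'n \<Rightarrow> bool" where
  "local_maximizer_on f D x \<longleftrightarrow> x \<in> D \<and>
     (\<exists>e>0. \<forall>y\<in>D. dist y x < e \<longrightarrow> f y \<le> f x)"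

end

theory Submission
  imports Defs
begin

text \<open>If the local maximizer \<open>x\<close> vanished on \<open>S\<close>, it would lie in \<open>\<Delta>\<^sub>V\<^sub>\<setminus>\<^sub>S\<close>, so
  \<open>\<gamma>\<^sub>S < \<alpha>\<close> would give some \<open>j \<in> S\<close> with \<open>(Ax)\<^sub>j > x'Ax - \<alpha> x'x = f(x)\<close>. Moving from \<open>x\<close>
  towards the vertex \<open>e\<^sub>j\<close> changes \<open>f\<close> by \<open>t (2((Ax)\<^sub>j - f(x)) + t (f(x) - 2(Ax)\<^sub>j))\<close>, since \<open>A\<close> is
  symmetric with zero diagonal and the penalty term ignores the coordinate \<open>j \<in> S\<close>; this increase
  is positive for small \<open>t > 0\<close>.\<close>

lemma Ihat_mult_vec: "(Ihat S *v z) $ i = (if i \<in> S then 0 else z $ i)"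
proof -
  have "(\<Sum>j\<in>UNIV. (if i = j \<and> i \<notin> S then 1 else 0) * z $ j) =
      (\<Sum>j\<in>UNIV. if j = i then (if i \<in> S then 0 else z $ i) else 0)"
    by (rule sum.cong) auto
  then show ?thesis
    unfolding Ihat_def matrix_vector_mult_def by simp
qed

lemma matrix_vector_mult_axis: "((A::real^'n^'n) *v axis j 1) $ i = A $ i $ j"
  unfolding matrix_vector_mult_def axis_def by (simp add: if_distrib cong: if_cong)

lemma inner_Ihat_mult_vec_vanishing: "(\<forall>i\<in>S. z $ i = 0) \<Longrightarrow> z \<bullet> (Ihat S *v z) = z \<bullet> z"
  by (metis Ihat_mult_vec vec_eq_iff)

lemma f_S_eq: "f_S A S \<alpha> z = z \<bullet> (A *v z) - \<alpha> * (z \<bullet> (Ihat S *v z))"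
  unfolding f_S_def
  by (simp add: matrix_vector_mult_diff_rdistrib scaleR_matrix_vector_assoc[symmetric] inner_diff_right)

lemma quadratic_form_combination:
  fixes M :: "real^'n^'n"
  shows "(a *\<^sub>R u + b *\<^sub>R v) \<bullet> (M *v (a *\<^sub>R u + b *\<^sub>R v)) =
     a\<^sup>2 * (u \<bullet> (M *v u)) + a * b * (u \<bullet> (M *v v) + v \<bullet> (M *v u)) + b\<^sup>2 * (v \<bullet> (M *v v))"
  by (simp add: matrix_vector_right_distrib matrix_vector_mult_scaleR inner_add_left inner_add_right
      power2_eq_square algebra_simps)

lemma f_S_towards_vertex:
  fixes A :: "real^'n^'n" and \<alpha> :: real and x :: "real^'n"
  assumes "transpose A = A" and "A $ j $ j = 0" and "j \<in> S"
  defines "c \<equiv> f_S A S \<alpha> x" and "b \<equiv> (A *v x) $ j"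
  shows "f_S A S \<alpha> ((1 - t) *\<^sub>R x + t *\<^sub>R axis j 1) = c + t * (2 * (b - c) + t * (c - 2 * b))"
proof -
  define M where "M = A - \<alpha> *\<^sub>R Ihat S"
  define e :: "real^'n" where "e = axis j 1"
  have M_mult: "M *v z = A *v z - \<alpha> *\<^sub>R (Ihat S *v z)" for z
    unfolding M_def by (simp add: matrix_vector_mult_diff_rdistrib scaleR_matrix_vector_assoc)
  have Ihat_e: "Ihat S *v e = 0"
    using \<open>j \<in> S\<close> by (simp add: vec_eq_iff Ihat_mult_vec e_def axis_def)
  have "x \<bullet> (A *v e) = (x v* A) $ j"
    by (simp add: e_def dot_lmul_matrix[symmetric] inner_axis)
  also have "\<dots> = b"
    by (metis assms(1) b_def transpose_matrix_vector)
  finally have xMe: "x \<bullet> (M *v e) = b"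
    by (simp add: M_mult Ihat_e inner_diff_right)
  have eMx: "e \<bullet> (M *v x) = b"
    using \<open>j \<in> S\<close> by (simp add: M_mult e_def b_def inner_axis' Ihat_mult_vec)
  have "e \<bullet> (A *v e) = 0"
    using assms(2) by (simp add: e_def inner_axis' matrix_vector_mult_axis)
  then have eMe: "e \<bullet> (M *v e) = 0"
    by (simp add: M_mult Ihat_e inner_diff_right)
  have "f_S A S \<alpha> ((1 - t) *\<^sub>R x + t *\<^sub>R e) = (1 - t)\<^sup>2 * c + (1 - t) * t * (2 * b)"
    unfolding f_S_def M_def[symmetric] quadratic_form_combination xMe eMx eMe
    by (simp add: c_def f_S_def M_def)
  then show ?thesis
    by (simp add: e_def power2_eq_square algebra_simps)
qed

lemma local_maximizer_on_segment_slope_nonpos: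
  fixes f :: "real^'n \<Rightarrow> real"
  assumes max: "local_maximizer_on f D x"
    and segment: "\<And>t. 0 \<le> t \<Longrightarrow> t \<le> 1 \<Longrightarrow> (1 - t) *\<^sub>R x + t *\<^sub>R y \<in> D"
    and quadratic: "\<And>t. f ((1 - t) *\<^sub>R x + t *\<^sub>R y) = f x + t * (p + t * q)"
  shows "p \<le> 0"
proof (rule tendsto_upperbound)
  show "((\<lambda>t. p + t * q) \<longlongrightarrow> p) (at_right 0)"
    by (auto intro!: tendsto_eq_intros)
  show "\<not> trivial_limit (at_right (0::real))"
    by simp
  obtain \<epsilon> where "\<epsilon> > 0" and near: "\<And>z. z \<in> D \<Longrightarrow> dist z x < \<epsilon> \<Longrightarrow> f z \<le> f x"
    using max unfolding local_maximizer_on_def by blast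
  define \<delta> where "\<delta> = min 1 (\<epsilon> / (norm (y - x) + 1))"
  have "p + t * q \<le> 0" if "0 < t" "t < \<delta>" for t
  proof -
    have "t * norm (y - x) < \<epsilon>"
      using that \<open>\<epsilon> > 0\<close>
      by (smt (verit, best) \<delta>_def divide_pos_pos less_divide_eq mult_left_mono norm_ge_zero)
    moreover have "(1 - t) *\<^sub>R x + t *\<^sub>R y - x = t *\<^sub>R (y - x)"
      by (simp add: algebra_simps)
    ultimately have "f ((1 - t) *\<^sub>R x + t *\<^sub>R y) \<le> f x"
      using that near segment \<delta>_def by (simp add: dist_norm)
    then show ?thesis
      using that quadratic by (simp add: mult_le_0_iff)
  qed
  moreover have "\<delta> > 0"
    using \<open>\<epsilon> > 0\<close> by (simp add: \<delta>_def add_nonneg_pos)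
  ultimately show "\<forall>\<^sub>F t in at_right 0. p + t * q \<le> 0"
    unfolding eventually_at_right_field by blast
qed

lemma convex_std_simplex: "convex std_simplex"
  unfolding convex_def std_simplex_def
  by (auto simp: sum.distrib sum_distrib_left[symmetric])

lemma axis_in_std_simplex: "axis j 1 \<in> std_simplex"
  by (simp add: std_simplex_def axis_def)

lemma quadratic_form_le_norm_bound:
  fixes A :: "real^'n^'n"
  obtains B where "\<And>z. z \<bullet> (A *v z) \<le> B * (z \<bullet> z)"
proof -
  obtain B where B: "\<And>z. norm (A *v z) \<le> B * norm z"
    using linear_bounded_pos[OF matrix_vector_mul_linear[of A]] by blast
  have "z \<bullet> (A *v z) \<le> B * (z \<bullet> z)" for z
  proof -
    have "z \<bullet> (A *v z) \<le> norm z * norm (A *v z)"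
      by (rule order_trans[OF abs_ge_self Cauchy_Schwarz_ineq2])
    also have "\<dots> \<le> norm z * (B * norm z)"
      by (simp add: B mult_left_mono)
    also have "\<dots> = B * (z \<bullet> z)"
      by (simp add: power2_norm_eq_inner[symmetric] power2_eq_square)
    finally show ?thesis .
  qed
  then show ?thesis
    using that by blast
qed

lemma gamma_ge:
  fixes A :: "real^'n^'n"
  assumes "\<forall>i j. A $ i $ j \<ge> 0" and "S \<noteq> {}" and "z \<in> simplex_on (UNIV - S)"
  shows "Min ((\<lambda>i. (z \<bullet> (A *v z) - (A *v z) $ i) / (z \<bullet> z)) ` S) \<le> gamma A S"
proof -
  define g where "g = (\<lambda>z::real^'n. Min ((\<lambda>i. (z \<bullet> (A *v z) - (A *v z) $ i) / (z \<bullet> z)) ` S))"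
  obtain B where B: "\<And>z. z \<bullet> (A *v z) \<le> B * (z \<bullet> z)"
    using quadratic_form_le_norm_bound by blast
  obtain i where "i \<in> S"
    using \<open>S \<noteq> {}\<close> by blast
  have "g w \<le> B" if "w \<in> simplex_on (UNIV - S)" for w
  proof -
    have "w \<in> std_simplex"
      using that by (simp add: simplex_on_def)
    then have "w \<bullet> w > 0" and "(A *v w) $ i \<ge> 0"
      using assms(1) by (auto simp: std_simplex_def matrix_vector_mult_def intro!: sum_nonneg)
    then have "(w \<bullet> (A *v w) - (A *v w) $ i) / (w \<bullet> w) \<le> B"
      using B[of w] by (simp add: divide_le_eq)
    moreover have "g w \<le> (w \<bullet> (A *v w) - (A *v w) $ i) / (w \<bullet> w)"
      unfolding g_def using \<open>i \<in> S\<close> by (intro Min_le) auto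
    ultimately show ?thesis
      by linarith
  qed
  then have "bdd_above (g ` simplex_on (UNIV - S))"
    by (rule bdd_aboveI2)
  then have "g z \<le> gamma A S"
    unfolding gamma_def g_def[symmetric] using assms(3) by (simp add: cSup_upper)
  then show ?thesis
    by (simp add: g_def)
qed

theorem proposition1:
  fixes A :: "real^'n^'n" and S :: "'n set" and \<alpha> :: real and x :: "real^'n"
  assumes "transpose A = A"
    and "\<forall>i j. A $ i $ j \<ge> 0"
    and "\<forall>i. A $ i $ i = 0"
    and "S \<noteq> {}"
    and "\<alpha> > gamma A S"
    and "local_maximizer_on (f_S A S \<alpha>) std_simplex x"
  shows "supp x \<inter> S \<noteq> {}"
proof
  assume "supp x \<inter> S = {}"
  have "x \<in> std_simplex"
    using assms(6) by (simp add: local_maximizer_on_def)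
  have vanish: "\<forall>i\<in>S. x $ i = 0"
    using \<open>x \<in> std_simplex\<close> \<open>supp x \<inter> S = {}\<close> unfolding std_simplex_def supp_def
    by (metis (mono_tags, lifting) disjoint_iff mem_Collect_eq order_less_le)
  have "x \<in> simplex_on (UNIV - S)"
    using \<open>x \<in> std_simplex\<close> \<open>supp x \<inter> S = {}\<close> by (auto simp: simplex_on_def)
  have "x \<bullet> x > 0"
    using \<open>x \<in> std_simplex\<close> by (auto simp: std_simplex_def)
  have "Min ((\<lambda>i. (x \<bullet> (A *v x) - (A *v x) $ i) / (x \<bullet> x)) ` S) < \<alpha>"
    using gamma_ge[OF assms(2,4) \<open>x \<in> simplex_on (UNIV - S)\<close>] assms(5) by linarith
  then obtain j where "j \<in> S" and "(x \<bullet> (A *v x) - (A *v x) $ j) / (x \<bullet> x) < \<alpha>"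
    using assms(4) by (subst (asm) Min_less_iff) auto
  then have "f_S A S \<alpha> x < (A *v x) $ j"
    using \<open>x \<bullet> x > 0\<close> vanish
    by (simp add: f_S_eq inner_Ihat_mult_vec_vanishing divide_less_eq algebra_simps)
  moreover have "2 * ((A *v x) $ j - f_S A S \<alpha> x) \<le> 0"
    using assms(6)
  proof (rule local_maximizer_on_segment_slope_nonpos)
    show "(1 - t) *\<^sub>R x + t *\<^sub>R axis j 1 \<in> std_simplex" if "0 \<le> t" "t \<le> 1" for t
      using convex_std_simplex \<open>x \<in> std_simplex\<close> axis_in_std_simplex that
      unfolding convex_alt by blast
    show "f_S A S \<alpha> ((1 - t) *\<^sub>R x + t *\<^sub>R axis j 1) = f_S A S \<alpha> x +
        t * (2 * ((A *v x) $ j - f_S A S \<alpha> x) + t * (f_S A S \<alpha> x - 2 * (A *v x) $ j))" for t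
      using f_S_towards_vertex[OF assms(1)] assms(3) \<open>j \<in> S\<close> by blast
  qed
  ultimately show False
    by (simp add: algebra_simps)
qed

end
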